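(* Let $x,p\in\mathbb{R}^d$ with $\lVert x\rVert=1$ and $p\neq 0$, and let $\delta\in\mathbb{R}$ with $\lVert p\rVert\ge\delta$. Put $\hat p=p/\lVert p\rVert$, and assume $p+x\neq 0$ and $\delta^2+2\delta\hat p^Tx+1>0$. Let $y=\frac{p+x}{\lVert p+x\rVert}$. Then $$\lVert\hat p-y\rVert\le\sqrt{2-2\,\frac{\delta+\hat p^Tx}{\sqrt{\delta^2+2\delta\hat p^Tx+1}}}.$$
   Context: $\lVert\cdot\rVert$ denotes the Euclidean norm on $\mathbb{R}^d$. *)

theory Defs
  imports "HOL-Analysis.Analysis"
begin

end

theory Submission
  imports Defs
begin

text \<open>Write \<open>q = p / \<parallel>p\<parallel>\<close>, \<open>r = \<parallel>p\<parallel>\<close> and \<open>c = q\<^sup>T x\<close>. Then \<open>\<parallel>p + x\<parallel>\<^sup>2 = (r + c)\<^sup>2 + (1 - c\<^sup>2)\<close>,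
  so the cosine of the angle between \<open>q\<close> and \<open>y\<close> is \<open>f (r)\<close> with
  \<open>f (t) = (t + c) / sqrt ((t + c)\<^sup>2 + (1 - c\<^sup>2))\<close>, and \<open>\<parallel>q - y\<parallel> = sqrt (2 - 2 f (r))\<close>.
  Since \<open>1 - c\<^sup>2 \<ge> 0\<close>, \<open>f\<close> is increasing, so \<open>r \<ge> \<delta>\<close> gives \<open>f (r) \<ge> f (\<delta>)\<close>, which is the claim.
  Monotonicity holds for every \<open>k \<ge> 0\<close> in \<open>t / sqrt (t\<^sup>2 + k)\<close>.\<close>

lemma divide_sqrt_square_add_le_nonneg:
  fixes u v k :: real
  assumes "0 \<le> v" "v \<le> u" "0 \<le> k"
  shows "v / sqrt (v\<^sup>2 + k) \<le> u / sqrt (u\<^sup>2 + k)"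
proof (rule power2_le_imp_le)
  have "v\<^sup>2 * (u\<^sup>2 + k) \<le> u\<^sup>2 * (v\<^sup>2 + k)"
    using assms power_mono[of v u 2] mult_right_mono[of "v\<^sup>2" "u\<^sup>2" k]
    by (simp add: algebra_simps)
  moreover have "0 \<le> v\<^sup>2 + k" and "v\<^sup>2 + k \<le> u\<^sup>2 + k"
    using assms power_mono[of v u 2] by simp_all
  ultimately have "v\<^sup>2 / (v\<^sup>2 + k) \<le> u\<^sup>2 / (u\<^sup>2 + k)"
    by (cases "v\<^sup>2 + k = 0") (auto simp: divide_simps add_nonneg_eq_0_iff)
  then show "(v / sqrt (v\<^sup>2 + k))\<^sup>2 \<le> (u / sqrt (u\<^sup>2 + k))\<^sup>2"
    using assms by (simp add: power_divide)
  show "0 \<le> u / sqrt (u\<^sup>2 + k)"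
    using assms by simp
qed

lemma mono_divide_sqrt_square_add:
  fixes k :: real
  assumes "0 \<le> k"
  shows "mono (\<lambda>t. t / sqrt (t\<^sup>2 + k))"
proof (rule monoI)
  fix v u :: real
  assume "v \<le> u"
  consider "0 \<le> v" | "u \<le> 0" | "v \<le> 0" "0 \<le> u"
    by linarith
  then show "v / sqrt (v\<^sup>2 + k) \<le> u / sqrt (u\<^sup>2 + k)"
  proof cases
    case 1
    show ?thesis
      using 1 \<open>v \<le> u\<close> assms by (rule divide_sqrt_square_add_le_nonneg)
  next
    case 2
    have "- u / sqrt ((- u)\<^sup>2 + k) \<le> - v / sqrt ((- v)\<^sup>2 + k)"
      using 2 \<open>v \<le> u\<close> assms by (intro divide_sqrt_square_add_le_nonneg) auto
    then show ?thesis
      by simp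
  next
    case 3
    then show ?thesis
      using assms by (simp add: divide_nonpos_nonneg order.trans[of _ 0])
  qed
qed

lemma norm_scaleR_add_unit:
  fixes q x :: "'a::real_inner"
  assumes "norm q = 1" "norm x = 1"
  shows "norm (r *\<^sub>R q + x) = sqrt ((r + q \<bullet> x)\<^sup>2 + (1 - (q \<bullet> x)\<^sup>2))"
proof -
  have "(norm (r *\<^sub>R q + x))\<^sup>2 = r\<^sup>2 * (q \<bullet> q) + 2 * r * (q \<bullet> x) + x \<bullet> x"
    unfolding power2_norm_eq_inner
    by (simp add: inner_add_left inner_add_right inner_commute power2_eq_square algebra_simps)
  also have "\<dots> = (r + q \<bullet> x)\<^sup>2 + (1 - (q \<bullet> x)\<^sup>2)"
    using assms by (simp add: dot_square_norm power2_eq_square algebra_simps)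
  finally show ?thesis
    by (metis norm_ge_zero real_sqrt_unique)
qed

lemma inner_normalize_scaleR_add_unit:
  fixes q x :: "'a::real_inner"
  assumes "norm q = 1" "norm x = 1"
  shows "q \<bullet> ((r *\<^sub>R q + x) /\<^sub>R norm (r *\<^sub>R q + x))
    = (r + q \<bullet> x) / sqrt ((r + q \<bullet> x)\<^sup>2 + (1 - (q \<bullet> x)\<^sup>2))"
  using assms by (simp add: norm_scaleR_add_unit inner_add_right dot_square_norm divide_inverse)

lemma norm_diff_unit_vectors:
  fixes u w :: "'a::real_inner"
  assumes "norm u = 1" "norm w = 1"
  shows "norm (u - w) = sqrt (2 - 2 * (u \<bullet> w))"
proof -
  have "(norm (u - w))\<^sup>2 = 2 - 2 * (u \<bullet> w)"
    using dot_norm_neg[of u w] assms by simp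
  then show ?thesis
    by (metis norm_ge_zero real_sqrt_unique)
qed

theorem lemma4:
  fixes x p :: "'a::euclidean_space" and \<delta> :: real
  assumes "norm x = 1" and "p \<noteq> 0" and "norm p \<ge> \<delta>"
    and "p + x \<noteq> 0"
    and "\<delta>^2 + 2 * \<delta> * ((p /\<^sub>R norm p) \<bullet> x) + 1 > 0"
  shows "norm (p /\<^sub>R norm p - (p + x) /\<^sub>R norm (p + x))
    \<le> sqrt (2 - 2 * ((\<delta> + (p /\<^sub>R norm p) \<bullet> x)
                   / sqrt (\<delta>^2 + 2 * \<delta> * ((p /\<^sub>R norm p) \<bullet> x) + 1)))"
proof -
  define q where "q = p /\<^sub>R norm p"
  define y where "y = (p + x) /\<^sub>R norm (p + x)"
  define c where "c = q \<bullet> x"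
  define f where "f t = (t + c) / sqrt ((t + c)\<^sup>2 + (1 - c\<^sup>2))" for t
  have q: "norm q = 1" and p: "p = norm p *\<^sub>R q"
    using assms(2) by (simp_all add: q_def)
  have y: "norm y = 1"
    using assms(4) by (simp add: y_def)
  have "\<bar>c\<bar> \<le> 1"
    using Cauchy_Schwarz_ineq2[of q x] q assms(1) by (simp add: c_def)
  then have g: "mono (\<lambda>t. t / sqrt (t\<^sup>2 + (1 - c\<^sup>2)))"
    by (intro mono_divide_sqrt_square_add) (simp add: abs_square_le_1)
  have "mono f"
  proof (rule monoI)
    fix s t :: real
    assume "s \<le> t"
    then show "f s \<le> f t"
      using monoD[OF g, of "s + c" "t + c"] by (simp add: f_def)
  qed
  have "norm (q - y) = sqrt (2 - 2 * (q \<bullet> y))"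
    using q y by (rule norm_diff_unit_vectors)
  also have "q \<bullet> y = f (norm p)"
    using inner_normalize_scaleR_add_unit[OF q assms(1), of "norm p", folded p]
    by (simp add: y_def f_def c_def)
  also have "sqrt (2 - 2 * f (norm p)) \<le> sqrt (2 - 2 * f \<delta>)"
    using monoD[OF \<open>mono f\<close> assms(3)] by simp
  also have "f \<delta> = (\<delta> + c) / sqrt (\<delta>\<^sup>2 + 2 * \<delta> * c + 1)"
    by (simp add: f_def power2_eq_square algebra_simps)
  finally show ?thesis
    by (simp add: q_def y_def c_def)
qed

end
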